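(* Let $X,X_1,X_2,\dots$ be random variables in a sub-linear expectation space $(\Omega,\mathscr H,\hat{\mathbb E})$ with $\{X_n\}$ independent, $X_n\overset d=X$ for all $n$, and $\hat{\mathbb E}[X]=\hat{\mathcal E}[X]=0$. Let $S_n=\sum_{i=1}^nX_i$, $V_n^2=\sum_{i=1}^nX_i^2$, $l(x)=\hat{\mathbb E}[X^2\wedge x^2]$, and assume: (I) $\mathbb V(|X|\ge x)=o(x^{-2}l(x))$ as $x\to\infty$; (II) $\limsup_{x\to\infty}\hat{\mathbb E}[X^2\wedge x^2]/\hat{\mathcal E}[X^2\wedge x^2]<\infty$; (III) $\hat{\mathbb E}[(|X|-c)^+]\to0$ as $c\to\infty$; (IV) $x_n\to\infty$ and $x_n=o(\sqrt n)$. Let $b_0=\inf\{x\ge0:l(x)>0\}$ and $z_n=\inf\{s\ge b_0+1: l(s)/s^2\le x_n^2/n\}$. Then, as $n\to\infty$, $$\mathbb V\big(S_n\ge x_nV_n,\ V_n^2\ge 9nl(z_n)\big)\le\exp\{-x_n^2+o(x_n^2)\}.$$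
   Context: Sub-linear expectation space: $\mathscr H$ is a linear space of real functions on a measurable space $(\Omega,\mathcal F)$, closed under $\varphi(X_1,\dots,X_n)$ for $\varphi$ bounded continuous or locally Lipschitz with polynomial growth ($|\varphi(x)-\varphi(y)|\le C(1+|x|^m+|y|^m)|x-y|$); $\hat{\mathbb E}:\mathscr H\to[-\infty,\infty]$ is monotone, constant preserving, sub-additive and positively homogeneous. $\hat{\mathcal E}[X]=-\hat{\mathbb E}[-X]$; $\mathbb V(A)=\inf\{\hat{\mathbb E}[\xi]:I_A\le\xi,\xi\in\mathscr H\}$. Independence: $\mathbf Y$ is independent of $\mathbf X$ if $\hat{\mathbb E}[\varphi(\mathbf X,\mathbf Y)]=\hat{\mathbb E}[\hat{\mathbb E}[\varphi(\mathbf x,\mathbf Y)]|_{\mathbf x=\mathbf X}]$ for all such locally Lipschitz $\varphi$ (whenever the relevant expectations are finite); $\{X_n\}$ is independent if $X_{i+1}$ is independent of $(X_1,\dots,X_i)$ for each $i$. $X_n\overset d=X$ means $\hat{\mathbb E}[\varphi(X_n)]=\hat{\mathbb E}[\varphi(X)]$ for all locally Lipschitz $\varphi$ of polynomial growth. $a\wedge b=\min(a,b)$. *)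

theory Defs
  imports "HOL-Analysis.Analysis"
begin

text \<open>Points of R^n are represented as real lists of length n, with the Euclidean norm.\<close>

definition lnorm :: "real list \<Rightarrow> real" where
  "lnorm xs = sqrt (sum_list (map (\<lambda>a. a\<^sup>2) xs))"

definition ldiff :: "real list \<Rightarrow> real list \<Rightarrow> real list" where
  "ldiff xs ys = map2 (-) xs ys"

definition lip_poly :: "nat \<Rightarrow> (real list \<Rightarrow> real) \<Rightarrow> bool" where
  "lip_poly n \<phi> \<longleftrightarrow> (\<exists>C::real. \<exists>m::nat. \<forall>x y. length x = n \<longrightarrow> length y = n \<longrightarrow>
      \<bar>\<phi> x - \<phi> y\<bar> \<le> C * (1 + lnorm x ^ m + lnorm y ^ m) * lnorm (ldiff x y))"

definition bdd_cont :: "nat \<Rightarrow> (real list \<Rightarrow> real) \<Rightarrow> bool" where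
  "bdd_cont n \<phi> \<longleftrightarrow> (\<exists>B. \<forall>x. length x = n \<longrightarrow> \<bar>\<phi> x\<bar> \<le> B) \<and>
     (\<forall>x. length x = n \<longrightarrow> (\<forall>e>0. \<exists>d>0. \<forall>y. length y = n \<longrightarrow> lnorm (ldiff y x) < d \<longrightarrow>
        \<bar>\<phi> y - \<phi> x\<bar> < e))"

definition at_pt :: "('w \<Rightarrow> real) list \<Rightarrow> 'w \<Rightarrow> real list" where
  "at_pt Xs w = map (\<lambda>Z. Z w) Xs"

text \<open>Sub-linear expectation space (H, E) on sample space 'w.
  E takes values in [-\<infinity>,\<infinity>] and is only constrained on H.\<close>
definition sublinear_expectation_space ::
  "('w \<Rightarrow> real) set \<Rightarrow> (('w \<Rightarrow> real) \<Rightarrow> ereal) \<Rightarrow> bool" where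
  "sublinear_expectation_space H E \<longleftrightarrow>
     (\<forall>X\<in>H. \<forall>Y\<in>H. (\<lambda>w. X w + Y w) \<in> H) \<and>
     (\<forall>X\<in>H. \<forall>c::real. (\<lambda>w. c * X w) \<in> H) \<and>
     (\<forall>c::real. (\<lambda>w. c) \<in> H) \<and>
     (\<forall>Xs \<phi>. set Xs \<subseteq> H \<longrightarrow> (bdd_cont (length Xs) \<phi> \<or> lip_poly (length Xs) \<phi>) \<longrightarrow>
        (\<lambda>w. \<phi> (at_pt Xs w)) \<in> H) \<and>
     (\<forall>X\<in>H. \<forall>Y\<in>H. (\<forall>w. X w \<le> Y w) \<longrightarrow> E X \<le> E Y) \<and>
     (\<forall>c::real. E (\<lambda>w. c) = ereal c) \<and>
     (\<forall>X\<in>H. \<forall>Y\<in>H. E (\<lambda>w. X w + Y w) \<le> E X + E Y) \<and>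
     (\<forall>X\<in>H. \<forall>a::real. a \<ge> 0 \<longrightarrow> E (\<lambda>w. a * X w) = ereal a * E X)"

definition lowerE :: "(('w \<Rightarrow> real) \<Rightarrow> ereal) \<Rightarrow> ('w \<Rightarrow> real) \<Rightarrow> ereal" where
  "lowerE E X = - E (\<lambda>w. - X w)"

definition capV :: "('w \<Rightarrow> real) set \<Rightarrow> (('w \<Rightarrow> real) \<Rightarrow> ereal) \<Rightarrow> 'w set \<Rightarrow> ereal" where
  "capV H E A = Inf {E \<xi> | \<xi>. \<xi> \<in> H \<and> (\<forall>w. indicator A w \<le> \<xi> w)}"

definition indep_of :: "('w \<Rightarrow> real) set \<Rightarrow> (('w \<Rightarrow> real) \<Rightarrow> ereal) \<Rightarrow>
    ('w \<Rightarrow> real) \<Rightarrow> ('w \<Rightarrow> real) list \<Rightarrow> bool" where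
  "indep_of H E Y Xs \<longleftrightarrow>
     (\<forall>\<phi>. lip_poly (length Xs + 1) \<phi> \<longrightarrow>
        (\<forall>x. length x = length Xs \<longrightarrow> \<bar>E (\<lambda>w. \<phi> (x @ [Y w]))\<bar> < \<infinity>) \<longrightarrow>
        E (\<lambda>w. \<phi> (at_pt Xs w @ [Y w])) =
          E (\<lambda>w. real_of_ereal (E (\<lambda>w'. \<phi> (at_pt Xs w @ [Y w'])))))"

definition same_distr :: "(('w \<Rightarrow> real) \<Rightarrow> ereal) \<Rightarrow> ('w \<Rightarrow> real) \<Rightarrow> ('w \<Rightarrow> real) \<Rightarrow> bool" where
  "same_distr E Y X \<longleftrightarrow> (\<forall>\<phi>. lip_poly 1 \<phi> \<longrightarrow> E (\<lambda>w. \<phi> [Y w]) = E (\<lambda>w. \<phi> [X w]))"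

end

theory Submission
  imports Defs
begin

text \<open>
  Clip the summands at \<open>c = z\<^sub>n / 100\<close>. On the event, either the clipped sum exceeds
  \<open>3/2 x\<^sub>n sqrt (n l(z\<^sub>n))\<close>, or (Cauchy-Schwarz) a Lipschitz ramp counts at least
  \<open>x\<^sub>n\<^sup>2/4\<close> summands with \<open>|X\<^sub>i| \<ge> c/2\<close>. Each alternative is handled by an
  exponential Chebyshev bound: independence factorises the sub-linear expectation of a product
  of exponentials, and the single-summand exponential moments are controlled by \<open>E X = 0\<close>,
  Taylor's formula and condition (I), which through a dyadic decomposition of \<open>(|X| - c)\<^sup>+\<close>
  also gives \<open>E (|X| - c)\<^sup>+ \<le> 4 \<eta> l(c) / c\<close>. With \<open>\<theta> = 3/2 x\<^sub>n / sqrt (n l(z\<^sub>n))\<close>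
  and \<open>l(z\<^sub>n)/z\<^sub>n\<^sup>2 \<asymp> x\<^sub>n\<^sup>2/n\<close> the two bounds are \<open>exp (-1.09 x\<^sub>n\<^sup>2)\<close> and
  \<open>exp (-1.99 x\<^sub>n\<^sup>2)\<close>, once condition (I) is used with \<open>\<eta> = 1/10^12\<close>. Hence the
  capacity is eventually at most \<open>exp (-x\<^sub>n\<^sup>2)\<close>, i.e. the error term can be taken to be \<open>0\<close>.
\<close>

section \<open>Sub-linear expectations\<close>

lemma sum_list_squares_nonneg: "sum_list (map (\<lambda>a::real. a\<^sup>2) xs) \<ge> 0"
  by (induct xs) auto

lemma lnorm_nonneg: "lnorm xs \<ge> 0"
  unfolding lnorm_def using sum_list_squares_nonneg[of xs] by simp

lemma lnorm_ldiff_single: "lnorm (ldiff [a] [b]) = \<bar>a - b\<bar>"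
  unfolding lnorm_def ldiff_def by simp

lemma lnorm_ldiff_Cons: "lnorm (ldiff (a # xs) (b # ys)) = sqrt ((a - b)\<^sup>2 + (lnorm (ldiff xs ys))\<^sup>2)"
  using sum_list_squares_nonneg[of "map2 (-) xs ys"] unfolding lnorm_def ldiff_def by (simp add: o_def)

lemma lnorm_ldiff_Cons_ge_head: "\<bar>a - b\<bar> \<le> lnorm (ldiff (a # xs) (b # ys))"
proof -
  have "sqrt ((a - b)\<^sup>2) \<le> sqrt ((a - b)\<^sup>2 + (lnorm (ldiff xs ys))\<^sup>2)"
    by (intro real_sqrt_le_mono) simp
  then show ?thesis unfolding lnorm_ldiff_Cons by simp
qed

lemma lnorm_ldiff_Cons_ge_tail: "lnorm (ldiff xs ys) \<le> lnorm (ldiff (a # xs) (b # ys))"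
proof -
  have "sqrt ((lnorm (ldiff xs ys))\<^sup>2) \<le> sqrt ((a - b)\<^sup>2 + (lnorm (ldiff xs ys))\<^sup>2)"
    by (intro real_sqrt_le_mono) simp
  then show ?thesis unfolding lnorm_ldiff_Cons using lnorm_nonneg by simp
qed

lemma lip_poly_1_of_lipschitz:
  assumes "\<And>a b. \<bar>f a - f b\<bar> \<le> K * \<bar>a - b\<bar>"
  shows "lip_poly 1 (\<lambda>ys. f (hd ys))"
  unfolding lip_poly_def
proof (intro exI[of _ "max K 0"] exI[of _ 0] allI impI)
  fix x y :: "real list" assume "length x = 1" "length y = 1"
  then obtain a b where xy: "x = [a]" "y = [b]"
    by (metis One_nat_def length_0_conv length_Suc_conv)
  have "\<bar>f a - f b\<bar> \<le> max K 0 * \<bar>a - b\<bar>"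
    by (meson assms abs_ge_zero max.cobounded1 mult_right_mono order.trans)
  also have "\<dots> \<le> max K 0 * (1 + 1 + 1) * \<bar>a - b\<bar>" by (simp add: mult_right_mono)
  finally show "\<bar>f (hd x) - f (hd y)\<bar> \<le> max K 0 * (1 + lnorm x ^ 0 + lnorm y ^ 0) * lnorm (ldiff x y)"
    using xy lnorm_ldiff_single by simp
qed

lemma same_distr_lipschitz:
  assumes "same_distr E Y X" "\<And>a b. \<bar>f a - f b\<bar> \<le> K * \<bar>a - b\<bar>"
  shows "E (\<lambda>w. f (Y w)) = E (\<lambda>w. f (X w))"
proof -
  have "E (\<lambda>w. (\<lambda>ys. f (hd ys)) [Y w]) = E (\<lambda>w. (\<lambda>ys. f (hd ys)) [X w])"
    using assms(1) lip_poly_1_of_lipschitz[OF assms(2)] unfolding same_distr_def by blast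
  then show ?thesis by simp
qed

locale sublinear_expectation =
  fixes H :: "('w \<Rightarrow> real) set" and E :: "('w \<Rightarrow> real) \<Rightarrow> ereal"
  assumes space: "sublinear_expectation_space H E"
begin

lemma add_in_H: "X \<in> H \<Longrightarrow> Y \<in> H \<Longrightarrow> (\<lambda>w. X w + Y w) \<in> H"
  using space unfolding sublinear_expectation_space_def by blast

lemma scale_in_H: "X \<in> H \<Longrightarrow> (\<lambda>w. c * X w) \<in> H"
  using space unfolding sublinear_expectation_space_def by blast

lemma const_in_H: "(\<lambda>w. c) \<in> H"
  using space unfolding sublinear_expectation_space_def by blast

lemma lip_poly_comp_in_H: "set Xs \<subseteq> H \<Longrightarrow> lip_poly (length Xs) \<phi> \<Longrightarrow> (\<lambda>w. \<phi> (at_pt Xs w)) \<in> H"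
  using space unfolding sublinear_expectation_space_def by blast

lemma expectation_mono: "X \<in> H \<Longrightarrow> Y \<in> H \<Longrightarrow> (\<And>w. X w \<le> Y w) \<Longrightarrow> E X \<le> E Y"
  using space unfolding sublinear_expectation_space_def by blast

lemma expectation_const [simp]: "E (\<lambda>w. c) = ereal c"
  using space unfolding sublinear_expectation_space_def by blast

lemma expectation_subadd: "X \<in> H \<Longrightarrow> Y \<in> H \<Longrightarrow> E (\<lambda>w. X w + Y w) \<le> E X + E Y"
  using space unfolding sublinear_expectation_space_def by blast

lemma expectation_pos_homogeneous: "X \<in> H \<Longrightarrow> a \<ge> 0 \<Longrightarrow> E (\<lambda>w. a * X w) = ereal a * E X"
  using space unfolding sublinear_expectation_space_def by blast

lemma lipschitz_comp_in_H:
  assumes "Z \<in> H" and "\<And>a b. \<bar>f a - f b\<bar> \<le> K * \<bar>a - b\<bar>"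
  shows "(\<lambda>w. f (Z w)) \<in> H"
  using lip_poly_comp_in_H[of "[Z]" "\<lambda>ys. f (hd ys)"] lip_poly_1_of_lipschitz[OF assms(2)] assms(1)
  by (simp add: at_pt_def)

lemma expectation_bounds:
  assumes "X \<in> H" "\<And>w. a \<le> X w" "\<And>w. X w \<le> b"
  shows "ereal a \<le> E X" "E X \<le> ereal b"
  using expectation_mono[OF const_in_H assms(1), of a] expectation_mono[OF assms(1) const_in_H, of b] assms
  by auto

lemma expectation_finite:
  assumes "X \<in> H" "\<And>w. a \<le> X w" "\<And>w. X w \<le> b"
  shows "E X = ereal (real_of_ereal (E X))"
  using expectation_bounds[OF assms] by (cases "E X") auto

lemma expectation_le_of_pointwise:
  "X \<in> H \<Longrightarrow> Y \<in> H \<Longrightarrow> (\<And>w. X w \<le> Y w) \<Longrightarrow> E Y \<le> ereal b \<Longrightarrow> E X \<le> ereal b"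
  using expectation_mono by (meson order.trans)

lemma expectation_add_le:
  assumes "X \<in> H" "Y \<in> H" "E X \<le> ereal a" "E Y \<le> ereal b"
  shows "E (\<lambda>w. X w + Y w) \<le> ereal (a + b)"
proof -
  have "E (\<lambda>w. X w + Y w) \<le> E X + E Y" using expectation_subadd[OF assms(1,2)] .
  also have "\<dots> \<le> ereal a + ereal b" using assms(3,4) by (rule add_mono)
  finally show ?thesis by simp
qed

lemma expectation_scale_le:
  assumes "X \<in> H" "0 \<le> a" "E X \<le> ereal b"
  shows "E (\<lambda>w. a * X w) \<le> ereal (a * b)"
  using expectation_pos_homogeneous[OF assms(1,2)] ereal_mult_left_mono[OF assms(3), of "ereal a"] assms(2)
  by simp

lemma capV_le_expectation: "\<xi> \<in> H \<Longrightarrow> (\<And>w. indicator A w \<le> \<xi> w) \<Longrightarrow> capV H E A \<le> E \<xi>"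
  unfolding capV_def by (intro Inf_lower) blast

lemma expectation_le_capV:
  assumes "X \<in> H" "\<And>w. X w \<le> indicator A w"
  shows "E X \<le> capV H E A"
  unfolding capV_def
proof (rule Inf_greatest, clarify)
  fix \<xi> assume "\<xi> \<in> H" "\<forall>w. indicator A w \<le> \<xi> w"
  then show "E X \<le> E \<xi>" using expectation_mono[OF assms(1)] assms(2) by (meson order.trans)
qed

lemma expectation_le_of_capV_le:
  assumes "X \<in> H" "b > 0" "\<And>w. X w \<le> b * indicator A w" "capV H E A \<le> ereal c"
  shows "E X \<le> ereal (b * c)"
proof -
  have XbH: "(\<lambda>w. X w / b) \<in> H" using scale_in_H[OF assms(1), of "1/b"] by simp
  have "\<And>w. X w / b \<le> indicator A w"
    using assms(2,3) by (simp add: divide_simps mult.commute)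
  then have "E (\<lambda>w. X w / b) \<le> ereal c"
    using expectation_le_capV[OF XbH] assms(4) by (meson order.trans)
  moreover have "X = (\<lambda>w. b * (X w / b))" using assms(2) by auto
  ultimately show ?thesis using expectation_scale_le[OF XbH, of b c] assms(2) by simp
qed

end

section \<open>Products of independent copies\<close>

lemma prod_list_map_bounds:
  fixes g :: "real \<Rightarrow> real"
  assumes "\<And>u. 0 \<le> g u" "\<And>u. g u \<le> B"
  shows "0 \<le> prod_list (map g xs) \<and> prod_list (map g xs) \<le> B ^ length xs"
proof (induct xs)
  case (Cons c xs)
  then have "g c * prod_list (map g xs) \<le> B * B ^ length xs"
    using assms[of c] by (intro mult_mono) auto
  then show ?case using Cons assms(1)[of c] by simp
qed simp

lemma prod_list_map_lipschitz:
  fixes g :: "real \<Rightarrow> real"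
  assumes g: "\<And>u. 0 \<le> g u" "\<And>u. g u \<le> B" and B: "1 \<le> B"
    and L: "\<And>a b. \<bar>g a - g b\<bar> \<le> K * \<bar>a - b\<bar>" and K: "K \<ge> 0"
  shows "length x = length y \<Longrightarrow> \<bar>prod_list (map g x) - prod_list (map g y)\<bar>
      \<le> real (length x) * K * B ^ length x * lnorm (ldiff x y)"
proof (induct x arbitrary: y)
  case (Cons a xs)
  then obtain b ys where y: "y = b # ys" and len: "length xs = length ys"
    by (metis length_Suc_conv)
  let ?P = "prod_list (map g xs)" and ?Q = "prod_list (map g ys)"
  let ?l = "lnorm (ldiff (a # xs) (b # ys))" and ?k = "length xs"
  have P: "0 \<le> ?P" "?P \<le> B ^ Suc ?k"
    using prod_list_map_bounds[OF g, where xs=xs] B by (auto intro: order_trans[of _ "B ^ ?k"])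
  have "\<bar>?P - ?Q\<bar> \<le> real ?k * K * B ^ ?k * lnorm (ldiff xs ys)" using Cons len by simp
  also have "\<dots> \<le> real ?k * K * B ^ ?k * ?l"
    using lnorm_ldiff_Cons_ge_tail K B by (intro mult_left_mono) auto
  finally have IH: "\<bar>?P - ?Q\<bar> \<le> real ?k * K * B ^ ?k * ?l" .
  have ga: "\<bar>g a - g b\<bar> \<le> K * ?l"
    using L[of a b] lnorm_ldiff_Cons_ge_head K by (meson mult_left_mono order.trans)
  have "g a * ?P - g b * ?Q = (g a - g b) * ?P + g b * (?P - ?Q)" by algebra
  then have "\<bar>g a * ?P - g b * ?Q\<bar> \<le> \<bar>g a - g b\<bar> * ?P + g b * \<bar>?P - ?Q\<bar>"
    using P g(1)[of b] by (metis abs_mult abs_of_nonneg abs_triangle_ineq)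
  also have "\<dots> \<le> (K * ?l) * B ^ Suc ?k + B * (real ?k * K * B ^ ?k * ?l)"
    using ga P IH g[of b] K lnorm_nonneg[of "ldiff (a # xs) (b # ys)"]
    by (intro add_mono mult_mono) auto
  also have "\<dots> = real (length (a # xs)) * K * B ^ length (a # xs) * ?l"
    by (simp add: algebra_simps)
  finally show ?case using y by simp
qed simp

lemma lip_poly_prod_list:
  fixes g :: "real \<Rightarrow> real"
  assumes g: "\<And>u. 0 \<le> g u" "\<And>u. g u \<le> B" and L: "\<And>a b. \<bar>g a - g b\<bar> \<le> K * \<bar>a - b\<bar>"
  shows "lip_poly n (\<lambda>ys. prod_list (map g ys))"
  unfolding lip_poly_def
proof (intro exI[of _ "real n * K * max B 1 ^ n"] exI[of _ 0] allI impI)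
  fix x y :: "real list" assume x: "length x = n" and y: "length y = n"
  have K: "K \<ge> 0" using L[of 1 0] by simp
  have g': "\<And>u. g u \<le> max B 1" using g(2) by (meson max.cobounded1 order.trans)
  have "\<bar>prod_list (map g x) - prod_list (map g y)\<bar> \<le> real n * K * max B 1 ^ n * lnorm (ldiff x y)"
    using prod_list_map_lipschitz[OF g(1) g' _ L K, of x y] x y by simp
  also have "\<dots> \<le> real n * K * max B 1 ^ n * (1 + lnorm x ^ 0 + lnorm y ^ 0) * lnorm (ldiff x y)"
    using K lnorm_nonneg[of "ldiff x y"] by (simp add: mult_right_mono)
  finally show "\<bar>prod_list (map g x) - prod_list (map g y)\<bar>
     \<le> real n * K * max B 1 ^ n * (1 + lnorm x ^ 0 + lnorm y ^ 0) * lnorm (ldiff x y)" .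
qed

lemma prod_list_at_pt:
  "prod_list (map g (at_pt (map Xs [1..<n+1]) w)) = (\<Prod>i\<in>{1..n}. g (Xs i w))"
proof -
  have "(\<Prod>i\<in>set [1..<n+1]. g (Xs i w)) = prod_list (map (\<lambda>i. g (Xs i w)) [1..<n+1])"
    by (rule prod.distinct_set_conv_list) simp
  moreover have "set [1..<n+1] = {1..n}" by auto
  ultimately show ?thesis by (simp add: at_pt_def o_def)
qed

lemma abs_exp_diff_le:
  fixes a b M :: real
  assumes "a \<le> M" "b \<le> M"
  shows "\<bar>exp a - exp b\<bar> \<le> exp M * \<bar>a - b\<bar>"
proof -
  have key: "exp x - exp y \<le> exp M * (x - y)" if "y \<le> x" "x \<le> M" for x y :: real
  proof -
    have "exp x * (1 + (y - x)) \<le> exp x * exp (y - x)"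
      using exp_ge_add_one_self[of "y - x"] by (intro mult_left_mono) auto
    then have "exp x - exp y \<le> exp x * (x - y)" by (simp add: exp_diff algebra_simps)
    also have "\<dots> \<le> exp M * (x - y)" using that by (intro mult_right_mono) auto
    finally show ?thesis .
  qed
  show ?thesis
    using key[of b a] key[of a b] assms by (cases "b \<le> a") (auto simp: abs_minus_commute)
qed

lemma lipschitz_exp_comp:
  fixes h :: "real \<Rightarrow> real"
  assumes "\<And>a b. \<bar>h a - h b\<bar> \<le> K * \<bar>a - b\<bar>" "\<And>u. h u \<le> C"
  shows "\<bar>exp (h a) - exp (h b)\<bar> \<le> (exp C * K) * \<bar>a - b\<bar>"
proof -
  have "\<bar>exp (h a) - exp (h b)\<bar> \<le> exp C * \<bar>h a - h b\<bar>" by (rule abs_exp_diff_le) (use assms(2) in auto)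
  also have "\<dots> \<le> exp C * (K * \<bar>a - b\<bar>)" using assms(1) by (intro mult_left_mono) auto
  finally show ?thesis by simp
qed

locale iid_copies = sublinear_expectation +
  fixes X :: "'w \<Rightarrow> real" and Xs :: "nat \<Rightarrow> 'w \<Rightarrow> real"
  assumes Xs_in_H: "\<And>n. n \<ge> 1 \<Longrightarrow> Xs n \<in> H"
    and indep: "\<And>i. i \<ge> 1 \<Longrightarrow> indep_of H E (Xs (i + 1)) (map Xs [1..<i+1])"
    and ident: "\<And>n. n \<ge> 1 \<Longrightarrow> same_distr E (Xs n) X"
begin

context
  fixes g :: "real \<Rightarrow> real" and B K :: real
  assumes g: "\<And>u. 0 \<le> g u" "\<And>u. g u \<le> B" and L: "\<And>a b. \<bar>g a - g b\<bar> \<le> K * \<bar>a - b\<bar>"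
begin

lemma prod_in_H: "(\<lambda>w. \<Prod>i\<in>{1..n}. g (Xs i w)) \<in> H"
proof -
  have "set (map Xs [1..<n+1]) \<subseteq> H" using Xs_in_H by auto
  from lip_poly_comp_in_H[OF this lip_poly_prod_list[OF g L]]
  show ?thesis by (simp only: prod_list_at_pt length_map length_upt diff_add_inverse2)
qed

lemma expectation_prod_Suc:
  assumes n: "n \<ge> 1" and e: "E (\<lambda>w. g (X w)) = ereal e"
  shows "E (\<lambda>w. \<Prod>i\<in>{1..Suc n}. g (Xs i w)) = E (\<lambda>w. e * (\<Prod>i\<in>{1..n}. g (Xs i w)))"
proof -
  let ?L = "map Xs [1..<n+1]" and ?Y = "Xs (n+1)" and ?\<phi> = "\<lambda>ys. prod_list (map g ys)"
  have inner: "E (\<lambda>w. ?\<phi> (x @ [?Y w])) = ereal (?\<phi> x * e)" for x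
  proof -
    have "0 \<le> ?\<phi> x" using prod_list_map_bounds[where g=g and xs=x, OF g] by blast
    then have "E (\<lambda>w. ?\<phi> x * g (?Y w)) = ereal (?\<phi> x) * E (\<lambda>w. g (?Y w))"
      using expectation_pos_homogeneous lipschitz_comp_in_H[OF Xs_in_H L] by simp
    also have "E (\<lambda>w. g (?Y w)) = ereal e" using same_distr_lipschitz[OF ident L] e by simp
    finally show ?thesis by simp
  qed
  have eq: "E (\<lambda>w. ?\<phi> (at_pt ?L w @ [?Y w])) =
        E (\<lambda>w. real_of_ereal (E (\<lambda>w'. ?\<phi> (at_pt ?L w @ [?Y w']))))"
  proof -
    have "\<forall>x. length x = length ?L \<longrightarrow> \<bar>E (\<lambda>w. ?\<phi> (x @ [?Y w]))\<bar> < \<infinity>"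
      using inner by simp
    then show ?thesis
      using indep[OF n] lip_poly_prod_list[OF g L, of "length ?L + 1"] unfolding indep_of_def by blast
  qed
  have lhs: "?\<phi> (at_pt ?L w @ [?Y w]) = (\<Prod>i\<in>{1..Suc n}. g (Xs i w))" for w
  proof -
    have "at_pt ?L w @ [?Y w] = at_pt (map Xs [1..<Suc n+1]) w" by (simp add: at_pt_def)
    then show ?thesis using prod_list_at_pt[of g Xs "Suc n" w] by simp
  qed
  have rhs: "real_of_ereal (E (\<lambda>w'. ?\<phi> (at_pt ?L w @ [?Y w']))) = e * (\<Prod>i\<in>{1..n}. g (Xs i w))"
    for w using inner[of "at_pt ?L w"] prod_list_at_pt[of g Xs n w] by simp
  from eq show ?thesis unfolding lhs rhs .
qed

lemma expectation_prod:
  assumes e: "E (\<lambda>w. g (X w)) = ereal e"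
  shows "E (\<lambda>w. \<Prod>i\<in>{1..n}. g (Xs i w)) = ereal (e ^ n)"
proof (induct n)
  case (Suc n)
  have e1: "E (\<lambda>w. g (Xs 1 w)) = ereal e" using same_distr_lipschitz[OF ident L] e by simp
  have "0 \<le> e"
    using expectation_bounds(1)[OF lipschitz_comp_in_H[OF Xs_in_H L], of 1 0 B] g e1 by simp
  then show ?case
    using Suc e1 expectation_prod_Suc[OF _ e, of n] expectation_pos_homogeneous[OF prod_in_H]
    by (cases "n = 0") auto
qed simp

end

lemma exp_sum_in_H:
  fixes h :: "real \<Rightarrow> real"
  assumes "\<And>a b. \<bar>h a - h b\<bar> \<le> K * \<bar>a - b\<bar>" "\<And>u. h u \<le> C"
  shows "(\<lambda>w. exp (\<Sum>i=1..n. h (Xs i w))) \<in> H"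
  using prod_in_H[of "\<lambda>u. exp (h u)" "exp C", OF _ _ lipschitz_exp_comp[OF assms]] assms(2)
  by (simp add: exp_sum)

lemma expectation_exp_sum_le:
  fixes h :: "real \<Rightarrow> real"
  assumes L: "\<And>a b. \<bar>h a - h b\<bar> \<le> K * \<bar>a - b\<bar>" and C: "\<And>u. h u \<le> C"
    and mgf: "E (\<lambda>w. exp (h (X w))) \<le> ereal (1 + a)"
  shows "E (\<lambda>w. exp (\<Sum>i=1..n. h (Xs i w))) \<le> ereal (exp (real n * a))"
proof -
  have g: "\<And>u. 0 \<le> exp (h u)" "\<And>u. exp (h u) \<le> exp C" using C by auto
  note Lg = lipschitz_exp_comp[OF L C]
  have XH: "(\<lambda>w. exp (h (Xs 1 w))) \<in> H" using lipschitz_comp_in_H[OF Xs_in_H Lg] by simp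
  define e where "e = real_of_ereal (E (\<lambda>w. exp (h (X w))))"
  have same: "E (\<lambda>w. exp (h (Xs 1 w))) = E (\<lambda>w. exp (h (X w)))"
    using same_distr_lipschitz[OF ident Lg] by simp
  have e: "E (\<lambda>w. exp (h (X w))) = ereal e"
    using expectation_finite[OF XH g] same unfolding e_def by simp
  have "0 \<le> e" "e \<le> 1 + a" using expectation_bounds[OF XH g] same e mgf by auto
  then have "0 \<le> e" "e \<le> exp a" using exp_ge_add_one_self[of a] by linarith+
  then have "e ^ n \<le> exp (real n * a)" by (metis exp_of_nat_mult power_mono)
  then show ?thesis
    using expectation_prod[OF g Lg e, of n] by (simp add: exp_sum)
qed

end

section \<open>Clipping and ramps\<close>

lemma min_square_lipschitz:
  fixes a b t :: real
  shows "\<bar>min (a\<^sup>2) (t\<^sup>2) - min (b\<^sup>2) (t\<^sup>2)\<bar> \<le> (2 * \<bar>t\<bar>) * \<bar>a - b\<bar>"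
proof -
  define p where "p = min \<bar>a\<bar> \<bar>t\<bar>"
  define r where "r = min \<bar>b\<bar> \<bar>t\<bar>"
  have pa: "min (a\<^sup>2) (t\<^sup>2) = p\<^sup>2" unfolding p_def
    by (cases "\<bar>a\<bar> \<le> \<bar>t\<bar>") (auto simp: min_def abs_le_square_iff)
  have rb: "min (b\<^sup>2) (t\<^sup>2) = r\<^sup>2" unfolding r_def
    by (cases "\<bar>b\<bar> \<le> \<bar>t\<bar>") (auto simp: min_def abs_le_square_iff)
  have "\<bar>p - r\<bar> \<le> \<bar>\<bar>a\<bar> - \<bar>b\<bar>\<bar>" unfolding p_def r_def by (simp add: min_def abs_if)
  then have d: "\<bar>p - r\<bar> \<le> \<bar>a - b\<bar>" using abs_triangle_ineq3[of a b] by linarith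
  have s: "p + r \<le> 2 * \<bar>t\<bar>" "0 \<le> p" "0 \<le> r" unfolding p_def r_def by auto
  have "p\<^sup>2 - r\<^sup>2 = (p - r) * (p + r)" by (simp add: power2_eq_square algebra_simps)
  then have "\<bar>p\<^sup>2 - r\<^sup>2\<bar> = \<bar>p - r\<bar> * (p + r)" using s by (simp add: abs_mult)
  also have "\<dots> \<le> \<bar>a - b\<bar> * (2 * \<bar>t\<bar>)" using d s by (intro mult_mono) auto
  finally show ?thesis using pa rb by (simp add: mult.commute)
qed

definition clip :: "real \<Rightarrow> real \<Rightarrow> real" where
  "clip c u = max (- c) (min u c)"

lemma clip_lipschitz: "\<bar>clip c a - clip c b\<bar> \<le> 1 * \<bar>a - b\<bar>"
  unfolding clip_def by (simp add: abs_le_iff max_def min_def, linarith)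

lemma abs_clip_le: "c \<ge> 0 \<Longrightarrow> \<bar>clip c u\<bar> \<le> c"
  unfolding clip_def by (simp add: abs_le_iff max_def min_def)

lemma clip_square:
  assumes c: "c \<ge> 0"
  shows "(clip c u)\<^sup>2 = min (u\<^sup>2) (c\<^sup>2)"
proof (cases "\<bar>u\<bar> \<le> c")
  case True
  then have "clip c u = u" unfolding clip_def by (simp add: abs_le_iff max_def min_def)
  moreover have "u\<^sup>2 \<le> c\<^sup>2" using abs_le_square_iff[of u c] True c by simp
  ultimately show ?thesis by simp
next
  case False
  then have "clip c u = c \<or> clip c u = - c" unfolding clip_def by (auto simp: max_def min_def)
  moreover have "c\<^sup>2 \<le> u\<^sup>2" using abs_le_square_iff[of c u] False c by simp
  ultimately show ?thesis by auto
qed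

lemma scaled_clip_lipschitz: "\<theta> \<ge> 0 \<Longrightarrow> \<bar>\<theta> * clip c a - \<theta> * clip c b\<bar> \<le> \<theta> * \<bar>a - b\<bar>"
  using mult_left_mono[OF clip_lipschitz[of c a b]] by (simp add: abs_mult right_diff_distrib[symmetric])

lemma scaled_clip_le: "c \<ge> 0 \<Longrightarrow> \<theta> \<ge> 0 \<Longrightarrow> \<theta> * clip c u \<le> \<theta> * c"
  using abs_clip_le[of c u] by (intro mult_left_mono) (auto simp: abs_le_iff)

lemma exp_clip_le:
  assumes c: "c \<ge> 0" and \<theta>: "\<theta> \<ge> 0"
  shows "exp (\<theta> * clip c u) \<le> 1 + (\<theta> * clip c u + (\<theta>\<^sup>2 / 2 * exp (\<theta> * c)) * min (u\<^sup>2) (c\<^sup>2))"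
proof -
  define y where "y = \<theta> * clip c u"
  obtain t where t: "\<bar>t\<bar> \<le> \<bar>y\<bar>" and e: "exp y = (\<Sum>m<2. y ^ m / fact m) + exp t / fact 2 * y ^ 2"
    using Maclaurin_exp_le[of y 2] by blast
  have "\<bar>y\<bar> \<le> \<theta> * c" unfolding y_def using abs_clip_le[OF c, of u] \<theta> by (simp add: abs_mult mult_left_mono)
  then have "exp t / 2 * y\<^sup>2 \<le> exp (\<theta> * c) / 2 * y\<^sup>2" using t by (intro mult_right_mono) auto
  then have "exp y \<le> 1 + y + exp (\<theta> * c) / 2 * y\<^sup>2" using e by (simp add: numeral_2_eq_2)
  also have "y\<^sup>2 = \<theta>\<^sup>2 * min (u\<^sup>2) (c\<^sup>2)" unfolding y_def using clip_square[OF c] by (simp add: power_mult_distrib)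
  finally show ?thesis unfolding y_def by (simp add: algebra_simps)
qed

definition ramp :: "real \<Rightarrow> real \<Rightarrow> real" where
  "ramp c u = min 1 (max 0 (2 * \<bar>u\<bar> / c - 1))"

lemma ramp_range: "0 \<le> ramp c u" "ramp c u \<le> 1"
  unfolding ramp_def by auto

lemma ramp_eq_1: "c > 0 \<Longrightarrow> c \<le> \<bar>u\<bar> \<Longrightarrow> ramp c u = 1"
  unfolding ramp_def by (simp add: divide_simps)

lemma ramp_eq_0: "c > 0 \<Longrightarrow> \<bar>u\<bar> < c / 2 \<Longrightarrow> ramp c u = 0"
  unfolding ramp_def by (simp add: divide_simps)

lemma ramp_lipschitz:
  assumes c: "c > 0"
  shows "\<bar>ramp c a - ramp c b\<bar> \<le> (2 / c) * \<bar>a - b\<bar>"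
proof -
  have "\<bar>ramp c a - ramp c b\<bar> \<le> \<bar>(2 * \<bar>a\<bar> / c - 1) - (2 * \<bar>b\<bar> / c - 1)\<bar>"
    unfolding ramp_def by (simp add: abs_le_iff max_def min_def, linarith)
  also have "(2 * \<bar>a\<bar> / c - 1) - (2 * \<bar>b\<bar> / c - 1) = (2 / c) * (\<bar>a\<bar> - \<bar>b\<bar>)"
    using c by (simp add: field_simps)
  also have "\<bar>(2 / c) * (\<bar>a\<bar> - \<bar>b\<bar>)\<bar> = (2 / c) * \<bar>\<bar>a\<bar> - \<bar>b\<bar>\<bar>"
    using c by (simp only: abs_mult) simp
  also have "\<dots> \<le> (2 / c) * \<bar>a - b\<bar>" using c abs_triangle_ineq3[of a b] by (intro mult_left_mono) auto
  finally show ?thesis .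
qed

lemma scaled_ramp_lipschitz:
  assumes "c > 0" "\<theta> \<ge> 0"
  shows "\<bar>\<theta> * ramp c a - \<theta> * ramp c b\<bar> \<le> (\<theta> * (2 / c)) * \<bar>a - b\<bar>"
  using mult_left_mono[OF ramp_lipschitz[OF assms(1), of a b] assms(2)] assms(2)
  by (simp add: abs_mult right_diff_distrib[symmetric] mult.assoc)

lemma scaled_ramp_le: "\<theta> \<ge> 0 \<Longrightarrow> \<theta> * ramp c u \<le> \<theta>"
  using ramp_range[of c u] by (simp add: mult_left_le)

lemma exp_ramp_le: "\<theta> \<ge> 0 \<Longrightarrow> exp (\<theta> * ramp c u) \<le> 1 + (exp \<theta> - 1) * ramp c u"
  using convex_onD[OF exp_convex, of "ramp c u" 0 \<theta>] ramp_range[of c u] by (simp add: algebra_simps)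

lemma diff_clip_le_ramp: "c > 0 \<Longrightarrow> u - clip c u \<le> ramp c u * \<bar>u\<bar>"
  using ramp_range[of c u] ramp_eq_1[of c u]
  by (cases "\<bar>u\<bar> \<le> c") (auto simp: clip_def max_def min_def)

text \<open>By Cauchy-Schwarz, clipping loses at most \<open>sqrt (\<Sum> ramp) \<cdot> V\<^sub>n\<close>.\<close>

lemma self_normalized_event_split:
  fixes Y :: "nat \<Rightarrow> real" and x c L :: real and n :: nat
  assumes x: "x \<ge> 0" and c: "c > 0" and L: "L \<ge> 0"
    and S: "(\<Sum>i=1..n. Y i) \<ge> x * sqrt (\<Sum>i=1..n. (Y i)\<^sup>2)" and Q: "(\<Sum>i=1..n. (Y i)\<^sup>2) \<ge> 9 * L"
  shows "(\<Sum>i=1..n. clip c (Y i)) \<ge> 3/2 * x * sqrt L \<or> (\<Sum>i=1..n. ramp c (Y i)) \<ge> x\<^sup>2/4"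
proof (rule disjCI)
  assume N: "\<not> (\<Sum>i=1..n. ramp c (Y i)) \<ge> x\<^sup>2/4"
  let ?Q = "\<Sum>i=1..n. (Y i)\<^sup>2" and ?N = "\<Sum>i=1..n. ramp c (Y i)"
  have "(\<Sum>i=1..n. Y i) - (\<Sum>i=1..n. clip c (Y i)) \<le> (\<Sum>i=1..n. ramp c (Y i) * \<bar>Y i\<bar>)"
    unfolding sum_subtractf[symmetric] by (intro sum_mono diff_clip_le_ramp[OF c])
  also have "\<dots> \<le> sqrt ?N * sqrt ?Q"
  proof -
    have "(\<Sum>i=1..n. ramp c (Y i) * \<bar>Y i\<bar>)\<^sup>2 \<le> (\<Sum>i=1..n. (ramp c (Y i))\<^sup>2) * ?Q"
      using Cauchy_Schwarz_ineq_sum[of "\<lambda>i. ramp c (Y i)" "\<lambda>i. \<bar>Y i\<bar>" "{1..n}"] by simp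
    also have "\<dots> \<le> ?N * ?Q"
      using ramp_range by (intro mult_right_mono sum_mono sum_nonneg) (auto simp: power2_eq_square mult_left_le)
    finally have "sqrt ((\<Sum>i=1..n. ramp c (Y i) * \<bar>Y i\<bar>)\<^sup>2) \<le> sqrt (?N * ?Q)"
      by (rule real_sqrt_le_mono)
    then show ?thesis by (simp add: real_sqrt_mult)
  qed
  also have "\<dots> \<le> x/2 * sqrt ?Q"
  proof (rule mult_right_mono)
    have "?N \<le> (x/2)\<^sup>2" using N by (simp add: power_divide)
    then have "sqrt ?N \<le> sqrt ((x/2)\<^sup>2)" by (rule real_sqrt_le_mono)
    then show "sqrt ?N \<le> x/2" using x by simp
  qed (simp add: sum_nonneg)
  finally have clipped: "(\<Sum>i=1..n. clip c (Y i)) \<ge> x/2 * sqrt ?Q" using S by simp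
  have "sqrt ?Q \<ge> 3 * sqrt L"
    using real_sqrt_le_mono[OF Q] by (simp add: real_sqrt_mult)
  then have "x/2 * sqrt ?Q \<ge> x/2 * (3 * sqrt L)" using x by (intro mult_left_mono) auto
  with clipped show "(\<Sum>i=1..n. clip c (Y i)) \<ge> 3/2 * x * sqrt L" by simp
qed

section \<open>Truncated second moments\<close>

locale truncated_second_moment = sublinear_expectation +
  fixes X :: "'w \<Rightarrow> real" and l :: "real \<Rightarrow> real"
  assumes X_in_H: "X \<in> H" and mean_zero: "E X = 0"
    and l_def: "\<And>t. l t = real_of_ereal (E (\<lambda>w. min ((X w)\<^sup>2) (t\<^sup>2)))"
begin

lemma truncated_square_in_H: "(\<lambda>w. min ((X w)\<^sup>2) (t\<^sup>2)) \<in> H"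
  using lipschitz_comp_in_H[OF X_in_H min_square_lipschitz] by blast

lemma expectation_truncated_square: "E (\<lambda>w. min ((X w)\<^sup>2) (t\<^sup>2)) = ereal (l t)"
  using expectation_finite[OF truncated_square_in_H, where a=0 and b="t\<^sup>2"] l_def by simp

lemma l_nonneg: "0 \<le> l t"
  using expectation_bounds(1)[OF truncated_square_in_H, where a=0 and b="t\<^sup>2"]
  by (simp add: expectation_truncated_square)

lemma l_mono:
  assumes "\<bar>s\<bar> \<le> \<bar>t\<bar>"
  shows "l s \<le> l t"
proof -
  have "s\<^sup>2 \<le> t\<^sup>2" using assms abs_le_square_iff by blast
  then have "E (\<lambda>w. min ((X w)\<^sup>2) (s\<^sup>2)) \<le> E (\<lambda>w. min ((X w)\<^sup>2) (t\<^sup>2))"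
    by (intro expectation_mono truncated_square_in_H) auto
  then show ?thesis by (simp add: expectation_truncated_square)
qed

lemma l_pos_of_lowerE_pos:
  assumes "0 < lowerE E (\<lambda>w. min ((X w)\<^sup>2) (t\<^sup>2))"
  shows "0 < l t"
proof -
  let ?Z = "\<lambda>w. min ((X w)\<^sup>2) (t\<^sup>2)"
  have mZ: "(\<lambda>w. - ?Z w) \<in> H" using scale_in_H[OF truncated_square_in_H, of "-1"] by simp
  define m where "m = real_of_ereal (E (\<lambda>w. - ?Z w))"
  have m: "E (\<lambda>w. - ?Z w) = ereal m"
    unfolding m_def by (rule expectation_finite[OF mZ, of "- t\<^sup>2" 0]) auto
  have "E (\<lambda>w. ?Z w + - ?Z w) \<le> E ?Z + E (\<lambda>w. - ?Z w)"
    by (rule expectation_subadd[OF truncated_square_in_H mZ])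
  then have "0 \<le> l t + m" using expectation_truncated_square m by (simp add: zero_ereal_def)
  moreover have "m < 0" using assms m unfolding lowerE_def by simp
  ultimately show ?thesis by linarith
qed

lemma l_pos_above_Inf_support:
  assumes "\<forall>\<^sub>F t in at_top. 0 < lowerE E (\<lambda>w. min ((X w)\<^sup>2) (t\<^sup>2))"
  shows "0 \<le> Inf {t. t \<ge> 0 \<and> l t > 0}" "0 < l (Inf {t. t \<ge> 0 \<and> l t > 0} + 1)"
proof -
  define B where "B = {t. t \<ge> 0 \<and> l t > 0}"
  obtain t0 where t0: "\<And>t. t \<ge> t0 \<Longrightarrow> 0 < lowerE E (\<lambda>w. min ((X w)\<^sup>2) (t\<^sup>2))"
    using assms by (auto simp: eventually_at_top_linorder)
  then have "max t0 0 \<in> B" unfolding B_def using l_pos_of_lowerE_pos by auto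
  then have B: "B \<noteq> {}" "bdd_below B" unfolding B_def by (blast, intro bdd_belowI[of _ 0], simp)
  show b0: "0 \<le> Inf {t. t \<ge> 0 \<and> l t > 0}"
    using B(1) unfolding B_def by (intro cInf_greatest) auto
  obtain s where "s \<in> B" "s < Inf B + 1" using cInf_less_iff[OF B] by (meson less_add_one)
  then have "l s \<le> l (Inf B + 1)" and "l s > 0" using b0 unfolding B_def by (auto intro!: l_mono)
  then show "0 < l (Inf {t. t \<ge> 0 \<and> l t > 0} + 1)" unfolding B_def by simp
qed

definition tail_mean :: "real \<Rightarrow> ereal" where
  "tail_mean c = E (\<lambda>w. max (\<bar>X w\<bar> - c) 0)"

lemma tail_excess_in_H: "(\<lambda>w. max (\<bar>X w\<bar> - c) 0) \<in> H"
  by (rule lipschitz_comp_in_H[OF X_in_H, of _ 1]) (simp add: abs_le_iff max_def, linarith)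

lemma truncated_excess_in_H: "(\<lambda>w. min (max (\<bar>X w\<bar> - c) 0) c) \<in> H"
  by (rule lipschitz_comp_in_H[OF X_in_H, of _ 1]) (simp add: abs_le_iff max_def min_def, linarith)

lemma tail_mean_split:
  assumes "c \<ge> 0"
  shows "tail_mean c \<le> E (\<lambda>w. min (max (\<bar>X w\<bar> - c) 0) c) + tail_mean (2 * c)"
proof -
  have "(\<lambda>w. max (\<bar>X w\<bar> - c) 0) = (\<lambda>w. min (max (\<bar>X w\<bar> - c) 0) c + max (\<bar>X w\<bar> - 2 * c) 0)"
    using assms by (auto simp: max_def min_def)
  then show ?thesis
    unfolding tail_mean_def using expectation_subadd[OF truncated_excess_in_H tail_excess_in_H] by simp
qed

lemma l_le_tail_mean:
  assumes c: "c \<ge> 0" and s: "s \<ge> 0" and d: "tail_mean c \<le> ereal d"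
  shows "l s \<le> (c + d) * s"
proof -
  have FH: "(\<lambda>w. c + max (\<bar>X w\<bar> - c) 0) \<in> H" by (rule add_in_H[OF const_in_H tail_excess_in_H])
  have "E (\<lambda>w. c + max (\<bar>X w\<bar> - c) 0) \<le> ereal (c + d)"
    using expectation_add_le[OF const_in_H tail_excess_in_H _ d[unfolded tail_mean_def]] by simp
  then have EF: "E (\<lambda>w. s * (c + max (\<bar>X w\<bar> - c) 0)) \<le> ereal (s * (c + d))"
    by (rule expectation_scale_le[OF FH s])
  have "min ((X w)\<^sup>2) (s\<^sup>2) \<le> s * \<bar>X w\<bar>" for w
  proof (cases "\<bar>X w\<bar> \<le> s")
    case True
    then have "\<bar>X w\<bar> * \<bar>X w\<bar> \<le> s * \<bar>X w\<bar>" by (intro mult_right_mono) auto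
    then show ?thesis by (simp add: power2_eq_square min_def abs_mult[symmetric])
  next
    case False
    then have "s * s \<le> s * \<bar>X w\<bar>" using s by (intro mult_left_mono) auto
    then show ?thesis by (simp add: power2_eq_square min_def)
  qed
  also have "s * \<bar>X w\<bar> \<le> s * (c + max (\<bar>X w\<bar> - c) 0)" for w using s by (intro mult_left_mono) auto
  finally have "E (\<lambda>w. min ((X w)\<^sup>2) (s\<^sup>2)) \<le> ereal (s * (c + d))"
    using expectation_le_of_pointwise[OF truncated_square_in_H scale_in_H[OF FH] _ EF] by blast
  then show ?thesis using expectation_truncated_square by (simp add: mult.commute)
qed

definition capacity_tail_bound :: "real \<Rightarrow> real \<Rightarrow> bool" where
  "capacity_tail_bound \<eta> s\<^sub>0 \<longleftrightarrow> (\<forall>s \<ge> s\<^sub>0. capV H E {w. s \<le> \<bar>X w\<bar>} \<le> ereal (\<eta> * (l s / s\<^sup>2)))"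

lemma capacity_tail_bound_exists:
  assumes "\<And>\<epsilon>. \<epsilon> > 0 \<Longrightarrow> \<forall>\<^sub>F t in at_top. capV H E {w. \<bar>X w\<bar> \<ge> t} \<le> ereal (\<epsilon> * (l t / t\<^sup>2))"
    and "\<eta> > 0"
  obtains s\<^sub>0 where "s\<^sub>0 > 0" "capacity_tail_bound \<eta> s\<^sub>0"
proof -
  obtain s where "\<And>t. t \<ge> s \<Longrightarrow> capV H E {w. t \<le> \<bar>X w\<bar>} \<le> ereal (\<eta> * (l t / t\<^sup>2))"
    using assms by (auto simp: eventually_at_top_linorder)
  then have "capacity_tail_bound \<eta> (max s 1)" unfolding capacity_tail_bound_def by simp
  then show ?thesis by (intro that) auto
qed

lemma l_double_le:
  assumes cap: "capacity_tail_bound \<eta> s\<^sub>0" and a: "a \<ge> s\<^sub>0" "a > 0"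
  shows "l (2 * a) \<le> (1 + 3 * \<eta>) * l a"
proof -
  define d where "d = (\<lambda>w. min ((X w)\<^sup>2) ((2 * a)\<^sup>2) + (-1) * min ((X w)\<^sup>2) (a\<^sup>2))"
  have dH: "d \<in> H" unfolding d_def by (rule add_in_H[OF truncated_square_in_H scale_in_H[OF truncated_square_in_H]])
  have "d w \<le> (3 * a\<^sup>2) * indicator {w. a \<le> \<bar>X w\<bar>} w" for w
  proof (cases "a \<le> \<bar>X w\<bar>")
    case True
    then have "a\<^sup>2 \<le> (X w)\<^sup>2" using a abs_le_square_iff[of a "X w"] by simp
    then show ?thesis using True unfolding d_def by (auto simp: min_def power2_eq_square)
  next
    case False
    then have "(X w)\<^sup>2 \<le> a\<^sup>2" using a abs_le_square_iff[of "X w" a] by simp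
    moreover have "a\<^sup>2 \<le> (2 * a)\<^sup>2" using a by (simp add: power2_eq_square)
    ultimately show ?thesis using False unfolding d_def by (auto simp: min_def)
  qed
  then have Ed: "E d \<le> ereal (3 * a\<^sup>2 * (\<eta> * (l a / a\<^sup>2)))"
    using cap a unfolding capacity_tail_bound_def by (intro expectation_le_of_capV_le[OF dH]) auto
  have "(\<lambda>w. min ((X w)\<^sup>2) ((2 * a)\<^sup>2)) = (\<lambda>w. min ((X w)\<^sup>2) (a\<^sup>2) + d w)" unfolding d_def by auto
  then have "E (\<lambda>w. min ((X w)\<^sup>2) ((2 * a)\<^sup>2)) \<le> ereal (l a + 3 * a\<^sup>2 * (\<eta> * (l a / a\<^sup>2)))"
    using expectation_add_le[OF truncated_square_in_H dH _ Ed] expectation_truncated_square by simp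
  then have "l (2 * a) \<le> l a + 3 * a\<^sup>2 * (\<eta> * (l a / a\<^sup>2))"
    using expectation_truncated_square[of "2 * a"] by (metis ereal_less_eq(3))
  also have "\<dots> = (1 + 3 * \<eta>) * l a" using a by (simp add: field_simps)
  finally show ?thesis .
qed

lemma l_power2_le:
  assumes cap: "capacity_tail_bound \<eta> s\<^sub>0" and a: "a \<ge> s\<^sub>0" "a > 0" and \<eta>: "\<eta> \<ge> 0"
  shows "l (2 ^ k * a) \<le> (1 + 3 * \<eta>) ^ k * l a"
proof (induct k)
  case (Suc k)
  have "l (2 ^ Suc k * a) = l (2 * (2 ^ k * a))" by (simp add: mult.assoc)
  also have "\<dots> \<le> (1 + 3 * \<eta>) * l (2 ^ k * a)"
    using a by (intro l_double_le[OF cap]) (auto intro: order_trans[of _ a])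
  also have "\<dots> \<le> (1 + 3 * \<eta>) * ((1 + 3 * \<eta>) ^ k * l a)" using Suc \<eta> by (intro mult_left_mono) auto
  finally show ?case by simp
qed simp

text \<open>Splitting \<open>(|X| - a)\<^sup>+\<close> into the dyadic pieces \<open>min ((|X| - 2\<^sup>k a)\<^sup>+) (2\<^sup>k a)\<close>,
  each of which costs at most \<open>2\<^sup>k a\<close> times the capacity of \<open>|X| \<ge> 2\<^sup>k a\<close>.\<close>

lemma tail_mean_le_dyadic_sum:
  assumes cap: "capacity_tail_bound \<eta> s\<^sub>0" and a: "a \<ge> s\<^sub>0" "a > 0" and \<eta>: "\<eta> \<ge> 0"
  shows "tail_mean a \<le> ereal (\<Sum>k<K. \<eta> * (1 + 3 * \<eta>) ^ k * l a / (2 ^ k * a)) + tail_mean (2 ^ K * a)"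
proof (induct K)
  case (Suc K)
  define b where "b = 2 ^ K * a"
  have b: "b \<ge> s\<^sub>0" "b > 0" using a unfolding b_def by (auto intro: order_trans[of _ a])
  have "min (max (\<bar>X w\<bar> - b) 0) b \<le> b * indicator {w. b \<le> \<bar>X w\<bar>} w" for w
    using b by (auto simp: indicator_def min_def max_def)
  then have "E (\<lambda>w. min (max (\<bar>X w\<bar> - b) 0) b) \<le> ereal (b * (\<eta> * (l b / b\<^sup>2)))"
    using cap b unfolding capacity_tail_bound_def by (intro expectation_le_of_capV_le[OF truncated_excess_in_H]) auto
  also have "b * (\<eta> * (l b / b\<^sup>2)) = \<eta> * l b / b" using b by (simp add: power2_eq_square field_simps)
  also have "\<dots> \<le> \<eta> * ((1 + 3 * \<eta>) ^ K * l a) / b"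
    using l_power2_le[OF cap a \<eta>, of K] b \<eta> unfolding b_def by (intro divide_right_mono mult_left_mono) auto
  finally have piece: "E (\<lambda>w. min (max (\<bar>X w\<bar> - b) 0) b) \<le> ereal (\<eta> * (1 + 3 * \<eta>) ^ K * l a / (2 ^ K * a))"
    unfolding b_def by (simp add: mult.assoc)
  have "tail_mean a \<le> ereal (\<Sum>k<K. \<eta> * (1 + 3 * \<eta>) ^ k * l a / (2 ^ k * a)) + tail_mean b"
    using Suc unfolding b_def .
  also have "tail_mean b \<le> E (\<lambda>w. min (max (\<bar>X w\<bar> - b) 0) b) + tail_mean (2 * b)"
    using tail_mean_split b by simp
  also have "\<dots> \<le> ereal (\<eta> * (1 + 3 * \<eta>) ^ K * l a / (2 ^ K * a)) + tail_mean (2 ^ Suc K * a)"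
    using piece unfolding b_def by (simp add: mult.assoc add_right_mono)
  finally show ?case by (simp add: add.assoc[symmetric] add_left_mono)
qed simp

lemma tail_mean_le:
  assumes cap: "capacity_tail_bound \<eta> s\<^sub>0" and a: "a \<ge> s\<^sub>0" "a > 0" and \<eta>: "\<eta> > 0" "\<eta> \<le> 1/6"
    and lim: "(tail_mean \<longlongrightarrow> 0) at_top"
  shows "tail_mean a \<le> ereal (4 * \<eta> * l a / a)"
proof (rule ereal_le_epsilon2)
  fix \<delta> :: real assume \<delta>: "0 < \<delta>"
  have "eventually (\<lambda>c. tail_mean c < ereal \<delta>) at_top"
    using order_tendstoD(2)[OF lim, of "ereal \<delta>"] \<delta> by (simp add: zero_ereal_def)
  then obtain c0 where c0: "\<And>c. c \<ge> c0 \<Longrightarrow> tail_mean c < ereal \<delta>"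
    by (auto simp: eventually_at_top_linorder)
  obtain K where K: "c0 / a < 2 ^ K" using real_arch_pow[of 2 "c0 / a"] by auto
  then have tail: "tail_mean (2 ^ K * a) \<le> ereal \<delta>"
    using c0[of "2 ^ K * a"] a by (simp add: divide_simps)
  define r where "r = (1 + 3 * \<eta>) / 2"
  have r: "0 < r" "r < 1" "1 / (1 - r) \<le> 4" using \<eta> unfolding r_def by (auto simp: divide_simps)
  have "(\<Sum>k<K. \<eta> * (1 + 3 * \<eta>) ^ k * l a / (2 ^ k * a)) = \<eta> * l a / a * (\<Sum>k<K. r ^ k)"
    unfolding r_def by (simp add: sum_distrib_left power_divide field_simps)
  also have "\<dots> \<le> \<eta> * l a / a * 4"
    using geometric_sum_less[OF r(1,2), of "{..<K}"] r(3) l_nonneg[of a] a \<eta> by (intro mult_left_mono) auto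
  also have "\<dots> = 4 * \<eta> * l a / a" by simp
  finally have "(\<Sum>k<K. \<eta> * (1 + 3 * \<eta>) ^ k * l a / (2 ^ k * a)) \<le> 4 * \<eta> * l a / a" .
  then have "ereal (\<Sum>k<K. \<eta> * (1 + 3 * \<eta>) ^ k * l a / (2 ^ k * a)) + tail_mean (2 ^ K * a)
      \<le> ereal (4 * \<eta> * l a / a) + ereal \<delta>"
    using tail by (intro add_mono) auto
  with tail_mean_le_dyadic_sum[OF cap a, of K] \<eta>
  show "tail_mean a \<le> ereal (4 * \<eta> * l a / a) + ereal \<delta>" by simp
qed

lemma mgf_clip_le:
  assumes c: "c > 0" and \<theta>: "\<theta> \<ge> 0" and d: "tail_mean c \<le> ereal d"
  shows "E (\<lambda>w. exp (\<theta> * clip c (X w))) \<le> ereal (1 + (\<theta> * d + (\<theta>\<^sup>2 / 2 * exp (\<theta> * c)) * l c))"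
proof -
  let ?k = "\<theta>\<^sup>2 / 2 * exp (\<theta> * c)"
  have cH: "(\<lambda>w. clip c (X w)) \<in> H" using lipschitz_comp_in_H[OF X_in_H clip_lipschitz] .
  have "\<bar>(clip c a - a) - (clip c b - b)\<bar> \<le> 2 * \<bar>a - b\<bar>" for a b
  proof -
    have eq: "(clip c a - a) - (clip c b - b) = (clip c a - clip c b) - (a - b)" by simp
    show ?thesis unfolding eq
      using clip_lipschitz[of c a b] abs_triangle_ineq4[of "clip c a - clip c b" "a - b"] by simp
  qed
  then have dH: "(\<lambda>w. clip c (X w) - X w) \<in> H" by (rule lipschitz_comp_in_H[OF X_in_H])
  have "E (\<lambda>w. clip c (X w) - X w) \<le> ereal d"
    by (rule expectation_le_of_pointwise[OF dH tail_excess_in_H _ d[unfolded tail_mean_def]])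
      (simp add: clip_def max_def min_def, linarith)
  then have "E (\<lambda>w. X w + (clip c (X w) - X w)) \<le> ereal (0 + d)"
    using mean_zero by (intro expectation_add_le[OF X_in_H dH]) auto
  then have "E (\<lambda>w. \<theta> * clip c (X w)) \<le> ereal (\<theta> * d)" by (intro expectation_scale_le[OF cH \<theta>]) simp
  moreover have "E (\<lambda>w. ?k * min ((X w)\<^sup>2) (c\<^sup>2)) \<le> ereal (?k * l c)"
    by (intro expectation_scale_le[OF truncated_square_in_H]) (auto simp: expectation_truncated_square)
  ultimately have "E (\<lambda>w. \<theta> * clip c (X w) + ?k * min ((X w)\<^sup>2) (c\<^sup>2)) \<le> ereal (\<theta> * d + ?k * l c)"
    by (intro expectation_add_le scale_in_H cH truncated_square_in_H)
  then have EF: "E (\<lambda>w. 1 + (\<theta> * clip c (X w) + ?k * min ((X w)\<^sup>2) (c\<^sup>2))) \<le> ereal (1 + (\<theta> * d + ?k * l c))"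
    by (intro expectation_add_le[OF const_in_H] add_in_H scale_in_H cH truncated_square_in_H) auto
  have gH: "(\<lambda>w. exp (\<theta> * clip c (X w))) \<in> H"
    using lipschitz_comp_in_H[OF X_in_H lipschitz_exp_comp[OF scaled_clip_lipschitz[OF \<theta>]
          scaled_clip_le[OF less_imp_le[OF c] \<theta>]]] .
  have FH: "(\<lambda>w. 1 + (\<theta> * clip c (X w) + ?k * min ((X w)\<^sup>2) (c\<^sup>2))) \<in> H"
    by (intro add_in_H scale_in_H const_in_H cH truncated_square_in_H)
  show ?thesis
    by (rule expectation_le_of_pointwise[OF gH FH _ EF], rule exp_clip_le) (use c \<theta> in auto)
qed

lemma mgf_ramp_le:
  assumes c: "c > 0" and \<theta>: "\<theta> \<ge> 0" and p: "capV H E {w. c / 2 \<le> \<bar>X w\<bar>} \<le> ereal p"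
  shows "E (\<lambda>w. exp (\<theta> * ramp c (X w))) \<le> ereal (1 + (exp \<theta> - 1) * p)"
proof -
  have rH: "(\<lambda>w. ramp c (X w)) \<in> H" using lipschitz_comp_in_H[OF X_in_H ramp_lipschitz[OF c]] .
  have "ramp c (X w) \<le> indicator {w. c / 2 \<le> \<bar>X w\<bar>} w" for w
    using ramp_eq_0[OF c] ramp_range by (force simp: indicator_def)
  then have "E (\<lambda>w. ramp c (X w)) \<le> ereal p" using expectation_le_capV[OF rH] p by (meson order.trans)
  then have "E (\<lambda>w. (exp \<theta> - 1) * ramp c (X w)) \<le> ereal ((exp \<theta> - 1) * p)"
    using \<theta> by (intro expectation_scale_le[OF rH]) auto
  then have EF: "E (\<lambda>w. 1 + (exp \<theta> - 1) * ramp c (X w)) \<le> ereal (1 + (exp \<theta> - 1) * p)"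
    by (intro expectation_add_le[OF const_in_H scale_in_H[OF rH]]) auto
  have FH: "(\<lambda>w. 1 + (exp \<theta> - 1) * ramp c (X w)) \<in> H"
    by (intro add_in_H const_in_H scale_in_H rH)
  have gH: "(\<lambda>w. exp (\<theta> * ramp c (X w))) \<in> H"
    using lipschitz_comp_in_H[OF X_in_H lipschitz_exp_comp[OF scaled_ramp_lipschitz[OF c \<theta>]
          scaled_ramp_le[OF \<theta>]]] .
  show ?thesis
    by (rule expectation_le_of_pointwise[OF gH FH _ EF], rule exp_ramp_le[OF \<theta>])
qed

end

section \<open>The truncation level\<close>

definition threshold :: "(real \<Rightarrow> real) \<Rightarrow> real \<Rightarrow> real \<Rightarrow> real" where
  "threshold l \<beta> q = Inf {s. s \<ge> \<beta> \<and> l s / s\<^sup>2 \<le> q}"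

context
  fixes l :: "real \<Rightarrow> real" and M \<beta> q :: real
  assumes l_mono: "\<And>s t. 0 \<le> s \<Longrightarrow> s \<le> t \<Longrightarrow> l s \<le> l t" and l_nonneg: "\<And>s. 0 \<le> l s"
    and l_linear: "\<And>s. 0 \<le> s \<Longrightarrow> l s \<le> M * s" and M: "M > 0" and \<beta>: "\<beta> > 0" and q: "q > 0"
begin

lemma threshold_set_nonempty: "{s. s \<ge> \<beta> \<and> l s / s\<^sup>2 \<le> q} \<noteq> {}"
proof -
  define s where "s = max \<beta> (M / q)"
  have s: "s \<ge> \<beta>" "s \<ge> M / q" "s > 0" using \<beta> unfolding s_def by auto
  have "l s / s\<^sup>2 \<le> M * s / s\<^sup>2" using l_linear[of s] s by (intro divide_right_mono) auto
  also have "\<dots> = M / s" using s by (simp add: power2_eq_square)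
  also have "\<dots> \<le> M / (M / q)" using s M q by (intro divide_left_mono) auto
  also have "\<dots> = q" using M by simp
  finally show ?thesis using s by auto
qed

lemma threshold_ge: "\<beta> \<le> threshold l \<beta> q"
  unfolding threshold_def using threshold_set_nonempty by (intro cInf_greatest) auto

lemma threshold_ratio_le: "l (threshold l \<beta> q) / (threshold l \<beta> q)\<^sup>2 \<le> 4 * q"
proof -
  define T where "T = {s. s \<ge> \<beta> \<and> l s / s\<^sup>2 \<le> q}"
  define z where "z = threshold l \<beta> q"
  have z: "z = Inf T" "z > 0" using threshold_ge \<beta> unfolding z_def T_def threshold_def by auto
  have Tbdd: "bdd_below T" unfolding T_def by (rule bdd_belowI[of _ \<beta>]) auto
  obtain s where sT: "s \<in> T" and s2: "s < 2 * z"
    using cInf_less_iff[OF threshold_set_nonempty[folded T_def] Tbdd, of "2 * z"] z by auto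
  have zs: "z \<le> s" unfolding z using sT Tbdd by (rule cInf_lower)
  have "s\<^sup>2 \<le> 4 * z\<^sup>2" using power_mono[of s "2 * z" 2] s2 zs z by (simp add: power_mult_distrib)
  then have "l s / z\<^sup>2 \<le> 4 * (l s / s\<^sup>2)"
    using l_nonneg[of s] z zs by (simp add: field_simps mult_left_mono)
  moreover have "l z / z\<^sup>2 \<le> l s / z\<^sup>2" using l_mono[of z s] zs z by (intro divide_right_mono) auto
  moreover have "l s / s\<^sup>2 \<le> q" using sT unfolding T_def by simp
  ultimately show ?thesis unfolding z_def by linarith
qed

lemma threshold_ratio_ge:
  assumes q_le: "q \<le> l \<beta> / \<beta>\<^sup>2"
  shows "q / 4 \<le> l (threshold l \<beta> q) / (threshold l \<beta> q)\<^sup>2"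
proof -
  define T where "T = {s. s \<ge> \<beta> \<and> l s / s\<^sup>2 \<le> q}"
  define z where "z = threshold l \<beta> q"
  have z: "z = Inf T" "z \<ge> \<beta>" "z > 0" using threshold_ge \<beta> unfolding z_def T_def threshold_def by auto
  have Tbdd: "bdd_below T" unfolding T_def by (rule bdd_belowI[of _ \<beta>]) auto
  show ?thesis
  proof (cases "z \<ge> 2 * \<beta>")
    case True
    have "z / 2 \<notin> T"
    proof
      assume "z / 2 \<in> T" then have "z \<le> z / 2" unfolding z using Tbdd by (rule cInf_lower)
      then show False using z by simp
    qed
    then have "q < l (z / 2) / (z / 2)\<^sup>2" using True unfolding T_def by auto
    also have "\<dots> = 4 * (l (z / 2) / z\<^sup>2)" by (simp add: power2_eq_square field_simps)
    also have "\<dots> \<le> 4 * (l z / z\<^sup>2)" using l_mono[of "z / 2" z] z by (simp add: divide_right_mono)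
    finally show ?thesis unfolding z_def by linarith
  next
    case False
    then have "z\<^sup>2 \<le> 4 * \<beta>\<^sup>2" using power_mono[of z "2 * \<beta>" 2] z by (simp add: power_mult_distrib)
    have "q / 4 \<le> l \<beta> / (4 * \<beta>\<^sup>2)" using q_le by simp
    also have "\<dots> \<le> l z / (4 * \<beta>\<^sup>2)" using l_mono[of \<beta> z] z \<beta> by (simp add: divide_right_mono)
    also have "\<dots> \<le> l z / z\<^sup>2"
      using \<open>z\<^sup>2 \<le> 4 * \<beta>\<^sup>2\<close> z(3) l_nonneg[of z] \<beta> by (intro divide_left_mono) auto
    finally show ?thesis unfolding z_def .
  qed
qed

lemma threshold_ge_of_ratio_le:
  assumes a: "a > 0" and q_le: "q \<le> l \<beta> / (4 * a\<^sup>2)"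
  shows "a \<le> threshold l \<beta> q"
proof -
  define z where "z = threshold l \<beta> q"
  have z: "z \<ge> \<beta>" "z > 0" using threshold_ge \<beta> unfolding z_def by auto
  have "a\<^sup>2 * (4 * q) \<le> l \<beta>" using q_le a by (simp add: le_divide_eq mult_ac)
  also have "\<dots> \<le> l z" using l_mono[of \<beta> z] \<beta> z by simp
  also have "\<dots> \<le> z\<^sup>2 * (4 * q)" using threshold_ratio_le z(2) unfolding z_def by (simp add: divide_le_eq mult_ac)
  finally have "a\<^sup>2 \<le> z\<^sup>2" by (rule mult_right_le_imp_le) (use q in simp)
  from power2_le_imp_le[OF this] z show ?thesis unfolding z_def by simp
qed

end

lemma self_normalized_event_le_exp:
  fixes Y :: "nat \<Rightarrow> real" and x c L \<theta> :: real and n :: nat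
  assumes x: "x \<ge> 0" and c: "c > 0" and L: "L \<ge> 0" and \<theta>: "\<theta> \<ge> 0"
    and S: "(\<Sum>i=1..n. Y i) \<ge> x * sqrt (\<Sum>i=1..n. (Y i)\<^sup>2)" and Q: "(\<Sum>i=1..n. (Y i)\<^sup>2) \<ge> 9 * L"
  shows "1 \<le> exp (- (\<theta> * (3/2 * x * sqrt L))) * exp (\<Sum>i=1..n. \<theta> * clip c (Y i))
           + exp (- (2 * x\<^sup>2)) * exp (\<Sum>i=1..n. 8 * ramp c (Y i))"
proof -
  have "1 \<le> exp (- (\<theta> * (3/2 * x * sqrt L))) * exp (\<Sum>i=1..n. \<theta> * clip c (Y i))
        \<or> 1 \<le> exp (- (2 * x\<^sup>2)) * exp (\<Sum>i=1..n. 8 * ramp c (Y i))"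
    using self_normalized_event_split[OF x c L S Q]
  proof
    assume "(\<Sum>i=1..n. clip c (Y i)) \<ge> 3/2 * x * sqrt L"
    then have "\<theta> * (3/2 * x * sqrt L) \<le> \<theta> * (\<Sum>i=1..n. clip c (Y i))"
      using \<theta> by (rule mult_left_mono)
    then have "\<theta> * (3/2 * x * sqrt L) \<le> (\<Sum>i=1..n. \<theta> * clip c (Y i))"
      by (simp add: sum_distrib_left)
    then show ?thesis by (simp flip: exp_add)
  next
    assume "(\<Sum>i=1..n. ramp c (Y i)) \<ge> x\<^sup>2/4"
    then have "2 * x\<^sup>2 \<le> (\<Sum>i=1..n. 8 * ramp c (Y i))" by (simp add: sum_distrib_left[symmetric])
    then show ?thesis by (simp flip: exp_add)
  qed
  then show ?thesis by (auto intro: order_trans add_increasing add_increasing2)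
qed

section \<open>Numerical estimates\<close>

lemma sqrt_bounds_of_ratio_bounds:
  fixes x z lz :: real and n :: nat
  assumes x: "x > 0" and z: "z > 0" and n: "n \<ge> 1"
    and lower: "(x\<^sup>2 / real n) / 4 \<le> lz / z\<^sup>2" and upper: "lz / z\<^sup>2 \<le> 4 * (x\<^sup>2 / real n)"
  shows "x * z / 2 \<le> sqrt (real n * lz)" "sqrt (real n * lz) \<le> 2 * x * z"
proof -
  have "(x * z / 2)\<^sup>2 \<le> real n * lz" "real n * lz \<le> (2 * x * z)\<^sup>2"
    using lower upper z n by (simp_all add: field_simps power_mult_distrib)
  then have "sqrt ((x * z / 2)\<^sup>2) \<le> sqrt (real n * lz)" "sqrt (real n * lz) \<le> sqrt ((2 * x * z)\<^sup>2)"
    by (simp_all only: real_sqrt_le_mono)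
  then show "x * z / 2 \<le> sqrt (real n * lz)" "sqrt (real n * lz) \<le> 2 * x * z"
    using x z by simp_all
qed

lemma clip_quadratic_term_le:
  fixes \<theta> c lc lz x :: real and n :: nat
  assumes "\<theta> * c \<le> 3/100" "0 \<le> lc" "lc \<le> lz" "\<theta>\<^sup>2 * (real n * lz) = 9/4 * x\<^sup>2"
  shows "real n * ((\<theta>\<^sup>2 / 2 * exp (\<theta> * c)) * lc) \<le> 10309/10000 * (9/8 * x\<^sup>2)"
proof -
  have "exp (\<theta> * c) \<le> exp (3/100)" using assms(1) by simp
  also have "\<dots> \<le> 1 + 3/100 + (3/100)\<^sup>2" by (rule exp_bound) auto
  finally have e: "exp (\<theta> * c) \<le> 10309/10000" by (simp add: power2_eq_square)
  have q: "\<theta>\<^sup>2 / 2 * (real n * lz) = 9/8 * x\<^sup>2"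
    using arg_cong[OF assms(4), of "\<lambda>t. t / 2"] by simp
  have "real n * ((\<theta>\<^sup>2 / 2 * exp (\<theta> * c)) * lc) = exp (\<theta> * c) * (\<theta>\<^sup>2 / 2 * (real n * lc))"
    by (simp add: algebra_simps)
  also have "\<dots> \<le> exp (\<theta> * c) * (\<theta>\<^sup>2 / 2 * (real n * lz))"
    using assms(3) by (intro mult_left_mono) auto
  also have "\<dots> = exp (\<theta> * c) * (9/8 * x\<^sup>2)" unfolding q ..
  also have "\<dots> \<le> 10309/10000 * (9/8 * x\<^sup>2)" using e by (intro mult_right_mono) auto
  finally show ?thesis .
qed

lemma clip_exponent_le:
  fixes x z L lc lz \<theta> c \<eta> :: real and n :: nat
  assumes x: "x > 0" and z: "z > 0" and L: "L > 0"
    and Lu: "sqrt L \<le> 2 * x * z" and Ll: "x * z / 2 \<le> sqrt L"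
    and lc: "lc \<le> lz" "0 \<le> lc" and nL: "real n * lz = L" and \<theta>: "\<theta> = 3/2 * x / sqrt L"
    and c: "c = z / 100" and \<eta>: "\<eta> = 1/10^12"
  shows "- (\<theta> * (3/2 * x * sqrt L)) + real n * (\<theta> * (4 * \<eta> * lc / c) + (\<theta>\<^sup>2 / 2 * exp (\<theta> * c)) * lc)
           \<le> - (109/100) * x\<^sup>2"
proof -
  have sL: "sqrt L > 0" using L by simp
  have main: "\<theta> * (3/2 * x * sqrt L) = 9/4 * x\<^sup>2" using \<theta> sL by (simp add: power2_eq_square field_simps)
  have "\<theta> * c = 3/200 * (x * z) / sqrt L" using sL unfolding \<theta> c by (simp add: field_simps)
  also have "\<dots> \<le> 3/200 * (x * z) / (x * z / 2)" using Ll x z sL by (intro divide_left_mono) auto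
  finally have "\<theta> * c \<le> 3/100" using x z by simp
  moreover have "\<theta>\<^sup>2 * (real n * lz) = 9/4 * x\<^sup>2"
    using L sL unfolding nL \<theta> by (simp add: power_divide power_mult_distrib)
  ultimately have quad: "real n * ((\<theta>\<^sup>2 / 2 * exp (\<theta> * c)) * lc) \<le> 10309/10000 * (9/8 * x\<^sup>2)"
    using lc by (intro clip_quadratic_term_le)
  have "real n * (\<theta> * (4 * \<eta> * lc / c)) = 400 * \<eta> * (\<theta> * (real n * lc)) / z"
    using z unfolding c by (simp add: field_simps)
  also have "\<dots> \<le> 400 * \<eta> * (\<theta> * (real n * lz)) / z"
    using lc x sL z \<eta> unfolding \<theta> by (intro divide_right_mono mult_left_mono) auto
  also have "\<theta> * (real n * lz) = 3/2 * x * sqrt L"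
  proof -
    have "L = sqrt L * sqrt L" using L by simp
    then show ?thesis unfolding nL \<theta> using sL by (subst (2) \<open>L = sqrt L * sqrt L\<close>) (simp add: field_simps)
  qed
  also have "400 * \<eta> * (3/2 * x * sqrt L) / z \<le> 400 * \<eta> * (3/2 * x * (2 * x * z)) / z"
    using Lu x z \<eta> by (intro divide_right_mono mult_left_mono) auto
  also have "\<dots> = 1200 * \<eta> * x\<^sup>2" using z by (simp add: power2_eq_square)
  also have "\<dots> \<le> 1/10000 * x\<^sup>2" using \<eta> by (intro mult_right_mono) auto
  finally have lin: "real n * (\<theta> * (4 * \<eta> * lc / c)) \<le> 1/10000 * x\<^sup>2" .
  have "real n * (\<theta> * (4 * \<eta> * lc / c) + (\<theta>\<^sup>2 / 2 * exp (\<theta> * c)) * lc)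
      = real n * (\<theta> * (4 * \<eta> * lc / c)) + real n * ((\<theta>\<^sup>2 / 2 * exp (\<theta> * c)) * lc)"
    by (rule distrib_left)
  then show ?thesis using main lin quad zero_le_power2[of x] by linarith
qed

lemma ramp_exponent_le:
  fixes x z lz lc p \<eta> :: real and n :: nat
  assumes n: "n \<ge> 1" and z: "z > 0" and lz: "lz / z\<^sup>2 \<le> 4 * (x\<^sup>2 / real n)"
    and lc: "lc \<le> lz" "0 \<le> lc" and p: "p = \<eta> * (lc / (z / 200)\<^sup>2)" and \<eta>: "\<eta> = 1/10^12"
  shows "- (2 * x\<^sup>2) + real n * ((exp 8 - 1) * p) \<le> - (199/100) * x\<^sup>2"
proof -
  have "exp (8::real) = exp 1 ^ 8" using exp_of_nat_mult[of 8 1] by simp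
  also have "\<dots> \<le> 3 ^ 8" using exp_le by (intro power_mono) auto
  finally have e8: "exp (8::real) \<le> 6561" by simp
  have "p = 40000 * \<eta> * (lc / z\<^sup>2)" using p by (simp add: power2_eq_square field_simps)
  also have "\<dots> \<le> 40000 * \<eta> * (4 * (x\<^sup>2 / real n))"
    using lc lz \<eta> z by (intro mult_left_mono order_trans[OF divide_right_mono lz]) auto
  finally have "real n * p \<le> 160000 * \<eta> * x\<^sup>2" using n by (simp add: field_simps)
  moreover have "0 \<le> p" using p lc \<eta> by simp
  ultimately have "(exp 8 - 1) * (real n * p) \<le> 6561 * (160000 * \<eta> * x\<^sup>2)"
    using e8 mult_mono[of "exp 8 - 1" 6561 "real n * p" "160000 * \<eta> * x\<^sup>2"] by simp
  moreover have "6561 * (160000 * \<eta> * x\<^sup>2) = 104976 / 100000000 * x\<^sup>2" using \<eta> by simp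
  moreover have "real n * ((exp 8 - 1) * p) = (exp 8 - 1) * (real n * p)" by (rule mult.left_commute)
  ultimately show ?thesis using zero_le_power2[of x] by linarith
qed

lemma exp_neg_square_split_le:
  fixes x :: real
  assumes "x \<ge> 3"
  shows "exp (- (109/100) * x\<^sup>2) + exp (- (199/100) * x\<^sup>2) \<le> exp (- x\<^sup>2)"
proof -
  have x2: "x\<^sup>2 \<ge> 9" using power_mono[of 3 x 2] assms by simp
  have "1 + 81/100 + (81/100)\<^sup>2 / 2 \<le> exp (81/100::real)" by (rule exp_lower_Taylor_quadratic) auto
  then have "2 \<le> exp (81/100::real)" by (simp add: power2_eq_square)
  moreover have "exp (81/100::real) \<le> exp (9/100 * x\<^sup>2)" using x2 by simp
  ultimately have "2 \<le> exp (9/100 * x\<^sup>2)" by linarith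
  have "exp (- (109/100) * x\<^sup>2) + exp (- (199/100) * x\<^sup>2) \<le> 2 * exp (- (109/100) * x\<^sup>2)"
    using x2 by simp
  also have "\<dots> \<le> exp (9/100 * x\<^sup>2) * exp (- (109/100) * x\<^sup>2)"
    using \<open>2 \<le> exp (9/100 * x\<^sup>2)\<close> by (intro mult_right_mono) auto
  also have "\<dots> = exp (- x\<^sup>2)" by (simp flip: exp_add)
  finally show ?thesis .
qed

section \<open>The self-normalized deviation bound\<close>

locale self_normalized_sum = truncated_second_moment H E X l + iid_copies H E X Xs
  for H :: "('w \<Rightarrow> real) set" and E X l Xs
begin

definition event :: "nat \<Rightarrow> real \<Rightarrow> real \<Rightarrow> 'w set" where
  "event n x L = {w. (\<Sum>i=1..n. Xs i w) \<ge> x * sqrt (\<Sum>i=1..n. (Xs i w)\<^sup>2) \<and> (\<Sum>i=1..n. (Xs i w)\<^sup>2) \<ge> 9 * L}"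

lemma capV_event_le:
  assumes x: "x \<ge> 0" and c: "c > 0" and L: "L \<ge> 0" and \<theta>: "\<theta> \<ge> 0"
    and d: "tail_mean c \<le> ereal d" and p: "capV H E {w. c / 2 \<le> \<bar>X w\<bar>} \<le> ereal p"
  shows "capV H E (event n x L)
    \<le> ereal (exp (- (\<theta> * (3/2 * x * sqrt L)) + real n * (\<theta> * d + (\<theta>\<^sup>2 / 2 * exp (\<theta> * c)) * l c))
           + exp (- (2 * x\<^sup>2) + real n * ((exp 8 - 1) * p)))"
proof -
  let ?k1 = "exp (- (\<theta> * (3/2 * x * sqrt L)))" and ?k2 = "exp (- (2 * x\<^sup>2))"
  define P1 where "P1 = (\<lambda>w. exp (\<Sum>i=1..n. \<theta> * clip c (Xs i w)))"
  define P2 where "P2 = (\<lambda>w. exp (\<Sum>i=1..n. 8 * ramp c (Xs i w)))"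
  note L1 = scaled_clip_lipschitz[OF \<theta>] and C1 = scaled_clip_le[OF less_imp_le[OF c] \<theta>]
  note L2 = scaled_ramp_lipschitz[OF c, of 8] and C2 = scaled_ramp_le[of 8]
  have H1: "P1 \<in> H" unfolding P1_def using exp_sum_in_H[OF L1 C1] .
  have H2: "P2 \<in> H" unfolding P2_def using exp_sum_in_H[OF L2 C2] by simp
  have "E P1 \<le> ereal (exp (real n * (\<theta> * d + (\<theta>\<^sup>2 / 2 * exp (\<theta> * c)) * l c)))"
    unfolding P1_def using expectation_exp_sum_le[OF L1 C1 mgf_clip_le[OF c \<theta> d]] .
  moreover have "E P2 \<le> ereal (exp (real n * ((exp 8 - 1) * p)))"
    unfolding P2_def using expectation_exp_sum_le[OF L2 C2 mgf_ramp_le[OF c _ p]] by simp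
  ultimately have "E (\<lambda>w. ?k1 * P1 w + ?k2 * P2 w)
      \<le> ereal (?k1 * exp (real n * (\<theta> * d + (\<theta>\<^sup>2 / 2 * exp (\<theta> * c)) * l c))
             + ?k2 * exp (real n * ((exp 8 - 1) * p)))"
    by (intro expectation_add_le[OF scale_in_H[OF H1] scale_in_H[OF H2]]
        expectation_scale_le[OF H1] expectation_scale_le[OF H2]) auto
  moreover have "indicator (event n x L) w \<le> ?k1 * P1 w + ?k2 * P2 w" for w
    using self_normalized_event_le_exp[OF x c L \<theta>, where Y="\<lambda>i. Xs i w" and n=n]
    unfolding P1_def P2_def event_def by (auto simp: indicator_def)
  then have "capV H E (event n x L) \<le> E (\<lambda>w. ?k1 * P1 w + ?k2 * P2 w)"
    by (intro capV_le_expectation add_in_H scale_in_H H1 H2)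
  ultimately show ?thesis unfolding exp_add by (rule order_trans[rotated])
qed

lemma capV_event_le_exp_neg_square:
  assumes cap: "capacity_tail_bound (1/10^12) s\<^sub>0" and lim: "(tail_mean \<longlongrightarrow> 0) at_top"
    and n: "n \<ge> 1" and x: "x \<ge> 3" and z: "z > 0" and zs: "200 * s\<^sub>0 \<le> z"
    and lower: "(x\<^sup>2 / real n) / 4 \<le> l z / z\<^sup>2" and upper: "l z / z\<^sup>2 \<le> 4 * (x\<^sup>2 / real n)"
  shows "capV H E (event n x (real n * l z)) \<le> ereal (exp (- x\<^sup>2))"
proof -
  define \<eta> :: real where "\<eta> = 1/10^12"
  define c where "c = z / 100"
  define L where "L = real n * l z"
  define \<theta> where "\<theta> = 3/2 * x / sqrt L"
  have "0 < (x\<^sup>2 / real n) / 4" using x n by simp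
  then have "0 < l z / z\<^sup>2" using lower by linarith
  then have L: "L > 0" unfolding L_def using z n by (simp add: zero_less_divide_iff)
  have c: "c > 0" "c \<ge> s\<^sub>0" "c / 2 \<ge> s\<^sub>0" "c \<le> z" "c / 2 = z / 200"
    using z zs unfolding c_def by auto
  have \<theta>: "\<theta> \<ge> 0" unfolding \<theta>_def using x L by simp
  have lc: "l c \<le> l z" "0 \<le> l c" "l (c / 2) \<le> l z" "0 \<le> l (c / 2)"
    using c l_nonneg by (auto intro: l_mono)
  have d: "tail_mean c \<le> ereal (4 * \<eta> * l c / c)"
    using tail_mean_le[OF cap c(2,1) _ _ lim] unfolding \<eta>_def by simp
  have p: "capV H E {w. c / 2 \<le> \<bar>X w\<bar>} \<le> ereal (\<eta> * (l (c / 2) / (c / 2)\<^sup>2))"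
    using cap c(3) unfolding capacity_tail_bound_def \<eta>_def by blast
  have "capV H E (event n x L)
      \<le> ereal (exp (- (\<theta> * (3/2 * x * sqrt L)) + real n * (\<theta> * (4 * \<eta> * l c / c) + (\<theta>\<^sup>2 / 2 * exp (\<theta> * c)) * l c))
             + exp (- (2 * x\<^sup>2) + real n * ((exp 8 - 1) * (\<eta> * (l (c / 2) / (c / 2)\<^sup>2)))))"
    using x L by (intro capV_event_le[OF _ c(1) _ \<theta> d p]) auto
  also have "\<dots> \<le> ereal (exp (- (109/100) * x\<^sup>2) + exp (- (199/100) * x\<^sup>2))"
  proof -
    have sq: "x * z / 2 \<le> sqrt L" "sqrt L \<le> 2 * x * z"
      using sqrt_bounds_of_ratio_bounds[OF _ z n lower upper] x unfolding L_def by auto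
    have "- (\<theta> * (3/2 * x * sqrt L)) + real n * (\<theta> * (4 * \<eta> * l c / c) + (\<theta>\<^sup>2 / 2 * exp (\<theta> * c)) * l c)
        \<le> - (109/100) * x\<^sup>2"
      by (rule clip_exponent_le[OF _ z L sq(2,1) lc(1,2) _ \<theta>_def c_def \<eta>_def]) (use x in \<open>simp_all add: L_def\<close>)
    moreover have "- (2 * x\<^sup>2) + real n * ((exp 8 - 1) * (\<eta> * (l (c / 2) / (c / 2)\<^sup>2))) \<le> - (199/100) * x\<^sup>2"
      by (rule ramp_exponent_le[OF n z upper lc(3,4) _ \<eta>_def]) (simp add: c(5))
    ultimately show ?thesis by (simp add: add_mono)
  qed
  also have "\<dots> \<le> ereal (exp (- x\<^sup>2))" using exp_neg_square_split_le[OF x] by simp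
  finally show ?thesis unfolding L_def .
qed

lemma eventually_capV_event_le_exp_neg_square:
  assumes cap: "capacity_tail_bound (1/10^12) s\<^sub>0" "s\<^sub>0 > 0" and lim: "(tail_mean \<longlongrightarrow> 0) at_top"
    and \<beta>: "\<beta> > 0" "l \<beta> > 0" and M: "M > 0" "\<And>s. 0 \<le> s \<Longrightarrow> l s \<le> M * s"
    and x: "filterlim x at_top sequentially" "(\<lambda>n. x n / sqrt (real n)) \<longlonglongrightarrow> 0"
  shows "\<forall>\<^sub>F n in sequentially.
    capV H E (event n (x n) (real n * l (threshold l \<beta> ((x n)\<^sup>2 / real n)))) \<le> ereal (exp (- (x n)\<^sup>2))"
proof -
  define q\<^sub>0 where "q\<^sub>0 = min (l \<beta> / \<beta>\<^sup>2) (l \<beta> / (4 * (200 * s\<^sub>0)\<^sup>2))"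
  have "q\<^sub>0 > 0" using \<beta> cap(2) unfolding q\<^sub>0_def by simp
  moreover have "(\<lambda>n. (x n / sqrt (real n))\<^sup>2) \<longlonglongrightarrow> 0\<^sup>2" by (rule tendsto_power[OF x(2)])
  ultimately have "\<forall>\<^sub>F n in sequentially. (x n / sqrt (real n))\<^sup>2 < q\<^sub>0"
    by (intro order_tendstoD(2)) auto
  moreover have "\<forall>\<^sub>F n in sequentially. 3 \<le> x n" using x(1) by (simp add: filterlim_at_top)
  moreover have "\<forall>\<^sub>F n in sequentially. 1 \<le> n" by (rule eventually_ge_at_top)
  ultimately show ?thesis
  proof eventually_elim
    case (elim n)
    define q where "q = (x n)\<^sup>2 / real n"
    have q: "q > 0" "q \<le> l \<beta> / \<beta>\<^sup>2" "q \<le> l \<beta> / (4 * (200 * s\<^sub>0)\<^sup>2)"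
      using elim unfolding q_def q\<^sub>0_def by (auto simp: power_divide)
    have mono: "\<And>s t. 0 \<le> s \<Longrightarrow> s \<le> t \<Longrightarrow> l s \<le> l t" by (intro l_mono) auto
    note hyps = mono l_nonneg M(2) M(1) \<beta>(1) q(1)
    define z where "z = threshold l \<beta> q"
    have z: "z > 0" "200 * s\<^sub>0 \<le> z" "q / 4 \<le> l z / z\<^sup>2" "l z / z\<^sup>2 \<le> 4 * q"
      using threshold_ge[OF hyps] \<beta>(1) threshold_ge_of_ratio_le[OF hyps _ q(3)] cap(2)
        threshold_ratio_ge[OF hyps q(2)] threshold_ratio_le[OF hyps]
      unfolding z_def by auto
    show ?case
      using capV_event_le_exp_neg_square[OF cap(1) lim elim(3) elim(2) z(1,2) z(3,4)[unfolded q_def]]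
      unfolding z_def q_def .
  qed
qed

end

theorem proposition4p1:
  fixes H :: "('w \<Rightarrow> real) set" and E :: "('w \<Rightarrow> real) \<Rightarrow> ereal"
    and X :: "'w \<Rightarrow> real" and Xs :: "nat \<Rightarrow> 'w \<Rightarrow> real" and x :: "nat \<Rightarrow> real"
    and l :: "real \<Rightarrow> real" and b0 :: real and z :: "nat \<Rightarrow> real"
  assumes space: "sublinear_expectation_space H E"
    and XH: "X \<in> H" and XsH: "\<And>n. n \<ge> 1 \<Longrightarrow> Xs n \<in> H"
    and indep: "\<And>i. i \<ge> 1 \<Longrightarrow> indep_of H E (Xs (i + 1)) (map Xs [1..<i+1])"
    and ident: "\<And>n. n \<ge> 1 \<Longrightarrow> same_distr E (Xs n) X"
    and mean0: "E X = 0" "lowerE E X = 0"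
    and l_def: "\<And>t. l t = real_of_ereal (E (\<lambda>w. min ((X w)\<^sup>2) (t\<^sup>2)))"
    and condI: "\<And>\<epsilon>. \<epsilon> > 0 \<Longrightarrow>
        \<forall>\<^sub>F t in at_top. capV H E {w. \<bar>X w\<bar> \<ge> t} \<le> ereal (\<epsilon> * (l t / t\<^sup>2))"
    and condII: "\<exists>C::real. \<forall>\<^sub>F t in at_top.
        0 < lowerE E (\<lambda>w. min ((X w)\<^sup>2) (t\<^sup>2)) \<and>
        E (\<lambda>w. min ((X w)\<^sup>2) (t\<^sup>2)) \<le> ereal C * lowerE E (\<lambda>w. min ((X w)\<^sup>2) (t\<^sup>2))"
    and condIII: "((\<lambda>c. E (\<lambda>w. max (\<bar>X w\<bar> - c) 0)) \<longlongrightarrow> 0) at_top"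
    and condIV: "filterlim x at_top sequentially" "(\<lambda>n. x n / sqrt (real n)) \<longlonglongrightarrow> 0"
    and b0_def: "b0 = Inf {t. t \<ge> 0 \<and> l t > 0}"
    and z_def: "\<And>n. z n = Inf {s. s \<ge> b0 + 1 \<and> l s / s\<^sup>2 \<le> (x n)\<^sup>2 / real n}"
  shows "\<exists>r :: nat \<Rightarrow> real. r \<longlonglongrightarrow> 0 \<and>
    (\<forall>\<^sub>F n in sequentially.
      capV H E {w. (\<Sum>i=1..n. Xs i w) \<ge> x n * sqrt (\<Sum>i=1..n. (Xs i w)\<^sup>2) \<and>
                   (\<Sum>i=1..n. (Xs i w)\<^sup>2) \<ge> 9 * real n * l (z n)}
      \<le> ereal (exp (- (x n)\<^sup>2 + r n * (x n)\<^sup>2)))"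
proof -
  interpret self_normalized_sum H E X l Xs
    by unfold_locales (fact space XH mean0(1) l_def XsH indep ident)+
  have lim: "(tail_mean \<longlongrightarrow> 0) at_top" using condIII unfolding tail_mean_def .
  obtain s\<^sub>0 where cap: "s\<^sub>0 > 0" "capacity_tail_bound (1/10^12) s\<^sub>0"
    by (rule capacity_tail_bound_exists[OF condI, where \<eta>="1/10^12"]) auto
  obtain c\<^sub>0 where "\<And>c. c \<ge> c\<^sub>0 \<Longrightarrow> tail_mean c < 1"
    using order_tendstoD(2)[OF lim, of 1] by (auto simp: eventually_at_top_linorder)
  then have "tail_mean (max c\<^sub>0 0) < ereal 1" by (simp add: one_ereal_def[symmetric])
  then have c: "max c\<^sub>0 0 \<ge> 0" "tail_mean (max c\<^sub>0 0) \<le> ereal 1" by auto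
  have "\<forall>\<^sub>F t in at_top. 0 < lowerE E (\<lambda>w. min ((X w)\<^sup>2) (t\<^sup>2))"
    using condII by (auto simp: eventually_conj_iff)
  then have b0: "0 \<le> b0" "0 < l (b0 + 1)"
    using l_pos_above_Inf_support unfolding b0_def by simp_all
  have z: "z n = threshold l (b0 + 1) ((x n)\<^sup>2 / real n)" for n
    unfolding threshold_def by (rule z_def)
  have "\<forall>\<^sub>F n in sequentially. capV H E (event n (x n) (real n * l (z n))) \<le> ereal (exp (- (x n)\<^sup>2))"
    using eventually_capV_event_le_exp_neg_square[OF cap(2,1) lim _ b0(2) _ l_le_tail_mean[OF c(1) _ c(2)] condIV]
      b0(1) c(1) unfolding z by simp
  then show ?thesis
    by (intro exI[of _ "\<lambda>_. 0"] conjI tendsto_const) (simp add: event_def mult.assoc)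
qed

end
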